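(* Let $G_{n,d}$ be a uniformly random $d$-regular graph on $[n]$ ($dn$ even) and let $\{a_i,b_i\}$, $i=1,\dots,k$, be distinct pairs of distinct vertices with $k\le n/(8d)$. Then, for $n$ sufficiently large, $$\mathbb P\big(\{a_i,b_i\}\in E(G_{n,d})\text{ for all }1\le i\le k\big)\le\left(\frac{20d}{n}\right)^{k}.$$ *)

theory Defs
  imports "HOL-Probability.Probability"
begin

definition all_edges :: "nat \<Rightarrow> nat set set" where
  "all_edges n = {e. e \<subseteq> {1..n} \<and> card e = 2}"

definition degree :: "nat set set \<Rightarrow> nat \<Rightarrow> nat" where
  "degree E v = card {e \<in> E. v \<in> e}"

definition regular_graphs :: "nat \<Rightarrow> nat \<Rightarrow> nat set set set" where
  "regular_graphs n d =
     {E. E \<subseteq> all_edges n \<and> (\<forall>v\<in>{1..n}. degree E v = d)}"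

definition random_regular :: "nat \<Rightarrow> nat \<Rightarrow> nat set set pmf" where
  "random_regular n d = pmf_of_set (regular_graphs n d)"

end

theory Submission
  imports Defs
begin

(* Let R be the set of d-regular graphs on [n] and, for a set F of edges,
   R_F = {G \<in> R. F \<subseteq> G}.  By a switching argument we show, for an edge e \<notin> F,
     n * |R_{F+e}| \<le> 4d * |R_F|    whenever 16d \<le> n and 8d(|F| + 1) \<le> n.
   Switching: for G \<in> R_{F+e}, e = {a,b}, and an "admissible" ordered edge (x,y) of G,
   replace the edges {a,b}, {x,y} by {a,x}, {b,y}.  The result lies in R_F, avoids e,
   and G is recovered from it together with (x,y).  Every G has at least
   nd - 4d^2 - 4|F| \<ge> nd/4 admissible pairs, while every image H admits at most d^2
   choices of (x,y) (x a neighbour of a, y a neighbour of b in H).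
   Iterating over the k edges gives |R_F| \<le> (4d/n)^k |R|, so the probability is at most
   (4d/n)^k \<le> (20d/n)^k; dividing by |R| needs R \<noteq> {}, which we get from a circulant
   graph when d < n and dn is even. *)

lemma finite_all_edges: "finite (all_edges n)"
proof -
  have "all_edges n \<subseteq> Pow {1..n}" by (auto simp: all_edges_def)
  thus ?thesis by (rule finite_subset) auto
qed

lemma finite_regular_graphs: "finite (regular_graphs n d)"
proof -
  have "regular_graphs n d \<subseteq> Pow (all_edges n)" by (auto simp: regular_graphs_def)
  thus ?thesis by (rule finite_subset) (simp add: finite_all_edges)
qed

lemma regular_graph_edges: "G \<in> regular_graphs n d \<Longrightarrow> G \<subseteq> all_edges n"
  by (simp add: regular_graphs_def)

lemma edge_endpoints:
  assumes "G \<subseteq> all_edges n" "{x,y} \<in> G"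
  shows "x \<noteq> y \<and> x \<in> {1..n} \<and> y \<in> {1..n}"
proof -
  have "{x,y} \<in> all_edges n" using assms by blast
  hence "{x,y} \<subseteq> {1..n}" "card {x,y} = 2" by (auto simp: all_edges_def)
  thus ?thesis by (cases "x = y") auto
qed

definition neighbours :: "nat set set \<Rightarrow> nat \<Rightarrow> nat set" where
  "neighbours G x = {y. {x,y} \<in> G}"

lemma neighbours_subset: "G \<subseteq> all_edges n \<Longrightarrow> neighbours G x \<subseteq> {1..n}"
  using edge_endpoints[of G n x] unfolding neighbours_def by auto

lemma finite_neighbours: "G \<subseteq> all_edges n \<Longrightarrow> finite (neighbours G x)"
  using neighbours_subset finite_atLeastAtMost by (rule finite_subset)

lemma degree_eq_card_neighbours:
  assumes G: "G \<subseteq> all_edges n"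
  shows "degree G x = card (neighbours G x)"
proof -
  have "bij_betw (\<lambda>y. {x,y}) (neighbours G x) {e\<in>G. x \<in> e}"
  proof (rule bij_betwI')
    fix y z assume "y \<in> neighbours G x" "z \<in> neighbours G x"
    show "({x,y} = {x,z}) = (y = z)" by (auto simp: doubleton_eq_iff)
  next
    fix y assume "y \<in> neighbours G x"
    thus "{x,y} \<in> {e\<in>G. x \<in> e}" by (auto simp: neighbours_def)
  next
    fix e assume e: "e \<in> {e\<in>G. x \<in> e}"
    hence "card e = 2" using G by (auto simp: all_edges_def)
    then obtain u v where uv: "e = {u,v}" by (auto simp: card_2_iff)
    show "\<exists>y\<in>neighbours G x. e = {x,y}"
    proof (cases "x = u")
      case True thus ?thesis using e uv by (auto simp: neighbours_def)
    next
      case False hence "e = {x,u}" using e uv by auto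
      thus ?thesis using e by (auto simp: neighbours_def)
    qed
  qed
  thus ?thesis unfolding degree_def by (rule bij_betw_same_card[symmetric])
qed

lemma card_neighbours:
  assumes G: "G \<in> regular_graphs n d" and x: "x \<in> {1..n}"
  shows "card (neighbours G x) = d"
  using G x degree_eq_card_neighbours[OF regular_graph_edges[OF G]]
  by (simp add: regular_graphs_def)

lemma card_arcs:
  assumes G: "G \<in> regular_graphs n d" and X: "X \<subseteq> {1..n}"
  shows "card (Sigma X (neighbours G)) = card X * d"
proof -
  have "finite X" using X finite_atLeastAtMost by (rule finite_subset)
  hence "card (Sigma X (neighbours G)) = (\<Sum>x\<in>X. card (neighbours G x))"
    using finite_neighbours[OF regular_graph_edges[OF G]] by (simp add: card_SigmaI)
  also have "\<dots> = (\<Sum>x\<in>X. d)" using X card_neighbours[OF G] by (intro sum.cong) auto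
  finally show ?thesis by simp
qed

section \<open>The switching operation\<close>

definition switch :: "nat set set \<Rightarrow> nat \<Rightarrow> nat \<Rightarrow> nat \<Rightarrow> nat \<Rightarrow> nat set set" where
  "switch G a b x y = (G - {{a,b},{x,y}}) \<union> {{a,x},{b,y}}"

definition admissible :: "nat set set \<Rightarrow> nat set set \<Rightarrow> nat \<Rightarrow> nat \<Rightarrow> (nat \<times> nat) set" where
  "admissible F G a b =
     {(x,y). {x,y} \<in> G \<and> {x,y} \<notin> F \<and> x \<notin> {a,b} \<and> y \<notin> {a,b} \<and> {a,x} \<notin> G \<and> {b,y} \<notin> G}"

lemma degree_exchange:
  assumes fin: "finite G" and pq: "p \<in> G" "q \<in> G" and rs: "r \<notin> G" "s \<notin> G"
    and same: "card ({p,q} \<inter> {e. v \<in> e}) = card ({r,s} \<inter> {e. v \<in> e})"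
  shows "degree ((G - {p,q}) \<union> {r,s}) v = degree G v"
proof -
  let ?S = "{e \<in> G. v \<in> e}" and ?P = "{p,q} \<inter> {e. v \<in> e}" and ?R = "{r,s} \<inter> {e. v \<in> e}"
  have split: "{e \<in> (G - {p,q}) \<union> {r,s}. v \<in> e} = (?S - ?P) \<union> ?R" by blast
  have "card ((?S - ?P) \<union> ?R) = card (?S - ?P) + card ?R"
    using fin rs by (intro card_Un_disjoint) auto
  also have "card (?S - ?P) = card ?S - card ?P"
    using fin pq by (intro card_Diff_subset) auto
  also have "card ?P \<le> card ?S" using fin pq by (intro card_mono) auto
  hence "card ?S - card ?P + card ?R = card ?S" using same by simp
  finally show ?thesis unfolding degree_def split .
qed

lemma switch_incidences:
  assumes "a \<noteq> b" "x \<noteq> y" "x \<notin> {a,b}" "y \<notin> {a,b}"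
  shows "card ({{a,b},{x,y}} \<inter> {e. v \<in> e}) = card ({{a,x},{b,y}} \<inter> {e. v \<in> e})"
proof -
  have "{{a,b},{x,y}} \<inter> {e. v \<in> e} =
      (if v \<in> {a,b} then {{a,b}} else if v \<in> {x,y} then {{x,y}} else {})"
    using assms by auto
  moreover have "{{a,x},{b,y}} \<inter> {e. v \<in> e} =
      (if v \<in> {a,x} then {{a,x}} else if v \<in> {b,y} then {{b,y}} else {})"
    using assms by auto
  ultimately show ?thesis by auto
qed

context
  fixes n d :: nat and F G :: "nat set set" and a b x y :: nat
  assumes G: "G \<in> regular_graphs n d" and ab: "{a,b} \<in> G"
    and xy: "(x,y) \<in> admissible F G a b"
begin

lemma admissible_facts:
  "{x,y} \<in> G" "{x,y} \<notin> F" "{a,x} \<notin> G" "{b,y} \<notin> G" "x \<notin> {a,b}" "y \<notin> {a,b}"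
  "a \<noteq> b" "a \<in> {1..n}" "b \<in> {1..n}" "x \<noteq> y" "x \<in> {1..n}" "y \<in> {1..n}"
proof -
  show xy_facts: "{x,y} \<in> G" "{x,y} \<notin> F" "{a,x} \<notin> G" "{b,y} \<notin> G" "x \<notin> {a,b}" "y \<notin> {a,b}"
    using xy unfolding admissible_def by blast+
  show "a \<noteq> b" "a \<in> {1..n}" "b \<in> {1..n}"
    using edge_endpoints[OF regular_graph_edges[OF G] ab] by simp_all
  show "x \<noteq> y" "x \<in> {1..n}" "y \<in> {1..n}"
    using edge_endpoints[OF regular_graph_edges[OF G] xy_facts(1)] by simp_all
qed

lemma switch_regular: "switch G a b x y \<in> regular_graphs n d"
proof -
  have "switch G a b x y \<subseteq> all_edges n"
    using regular_graph_edges[OF G] admissible_facts by (auto simp: switch_def all_edges_def)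
  moreover have "degree (switch G a b x y) v = d" if "v \<in> {1..n}" for v
  proof -
    have "degree (switch G a b x y) v = degree G v" unfolding switch_def
      using finite_subset[OF regular_graph_edges[OF G] finite_all_edges] ab admissible_facts
      by (intro degree_exchange switch_incidences) auto
    thus ?thesis using G that by (simp add: regular_graphs_def)
  qed
  ultimately show ?thesis by (simp add: regular_graphs_def)
qed

text \<open>Switching back recovers G, so G is determined by the switched graph and (x,y).\<close>
lemma switch_inverse: "(switch G a b x y - {{a,x},{b,y}}) \<union> {{a,b},{x,y}} = G"
  using admissible_facts(1,3-7,10) ab by (auto simp: switch_def doubleton_eq_iff)

lemma switch_properties:
  assumes "F \<subseteq> G" "{a,b} \<notin> F"
  shows "F \<subseteq> switch G a b x y" "{a,b} \<notin> switch G a b x y"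
    "x \<in> neighbours (switch G a b x y) a" "y \<in> neighbours (switch G a b x y) b"
  using assms admissible_facts(1-7,10) by (auto simp: switch_def neighbours_def doubleton_eq_iff)

end

section \<open>Many admissible switches\<close>

lemma card_edge_squares:
  assumes F: "F \<subseteq> all_edges n"
  shows "card (\<Union>f\<in>F. f \<times> f) \<le> 4 * card F"
proof -
  have finF: "finite F" using F finite_all_edges by (rule finite_subset)
  have "card (\<Union>f\<in>F. f \<times> f) \<le> (\<Sum>f\<in>F. card (f \<times> f))" by (rule card_UN_le[OF finF])
  also have "\<dots> = (\<Sum>f\<in>F. 4)"
  proof (rule sum.cong)
    fix f assume "f \<in> F"
    hence "card f = 2" using F by (auto simp: all_edges_def)
    thus "card (f \<times> f) = 4" by (simp add: card_cartesian_product)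
  qed simp
  finally show ?thesis by simp
qed

lemma admissible_subset_arcs:
  assumes "G \<subseteq> all_edges n"
  shows "admissible F G a b \<subseteq> Sigma {1..n} (neighbours G)"
  using edge_endpoints[OF assms] by (auto simp: admissible_def neighbours_def)

lemma finite_admissible:
  assumes "G \<subseteq> all_edges n"
  shows "finite (admissible F G a b)"
proof -
  have "finite (Sigma {1..n} (neighbours G))"
    using finite_atLeastAtMost finite_neighbours[OF assms] by (rule finite_SigmaI)
  with admissible_subset_arcs[OF assms] show ?thesis by (rule finite_subset)
qed

text \<open>An ordered edge (x,y) of G is admissible unless x or y is adjacent to a or b (the
  ordered edges "near" {a,b} and their reversals), or {x,y} lies in F.  As {a,b} is an edge,
  a and b themselves are neighbours of b and a.\<close>
lemma admissible_contains:
  assumes ab: "{a,b} \<in> G"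
  defines "near \<equiv> Sigma (neighbours G a \<union> neighbours G b) (neighbours G)"
  shows "Sigma V (neighbours G) - (near \<union> prod.swap ` near \<union> (\<Union>f\<in>F. f \<times> f))
    \<subseteq> admissible F G a b"
proof
  fix p assume p: "p \<in> Sigma V (neighbours G) - (near \<union> prod.swap ` near \<union> (\<Union>f\<in>F. f \<times> f))"
  obtain x y where pxy: "p = (x,y)" by (cases p)
  have xy: "{x,y} \<in> G" "{x,y} \<notin> F" using p pxy by (auto simp: neighbours_def)
  have x: "x \<notin> neighbours G a \<union> neighbours G b"
    using p pxy xy(1) by (auto simp: near_def neighbours_def)
  have y: "y \<notin> neighbours G a \<union> neighbours G b"
  proof
    assume "y \<in> neighbours G a \<union> neighbours G b"
    hence "(y,x) \<in> near" using xy(1) by (simp add: near_def neighbours_def insert_commute)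
    hence "p \<in> prod.swap ` near" unfolding pxy by force
    thus False using p by simp
  qed
  have "a \<in> neighbours G b" "b \<in> neighbours G a" using ab by (auto simp: neighbours_def insert_commute)
  thus "p \<in> admissible F G a b" using xy x y pxy by (auto simp: admissible_def neighbours_def)
qed

text \<open>Lower bound on the number of admissible pairs: all nd ordered edges except at most
  2d^2 + 2d^2 + 4|F| bad ones.\<close>
lemma card_admissible:
  assumes G: "G \<in> regular_graphs n d" and ab: "{a,b} \<in> G" and F: "F \<subseteq> all_edges n"
  shows "n * d \<le> card (admissible F G a b) + 4 * d * d + 4 * card F"
proof -
  have sub: "G \<subseteq> all_edges n" using G by (rule regular_graph_edges)
  define X where "X = neighbours G a \<union> neighbours G b"
  define arcs where "arcs = Sigma {1..n} (neighbours G)"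
  define near where "near = Sigma X (neighbours G)"
  define bad where "bad = near \<union> prod.swap ` near \<union> (\<Union>f\<in>F. f \<times> f)"
  have ab_n: "a \<in> {1..n}" "b \<in> {1..n}" using edge_endpoints[OF sub ab] by auto
  have X: "X \<subseteq> {1..n}" using neighbours_subset[OF sub] unfolding X_def by blast
  have "card X \<le> card (neighbours G a) + card (neighbours G b)"
    unfolding X_def by (rule card_Un_le)
  hence "card X \<le> 2 * d" using card_neighbours[OF G] ab_n by simp
  hence card_near: "card near \<le> 2 * d * d" using card_arcs[OF G X] unfolding near_def by simp
  have fin_near: "finite near" unfolding near_def
    using finite_subset[OF X finite_atLeastAtMost] finite_neighbours[OF sub] by (rule finite_SigmaI)
  have "card (prod.swap ` near) \<le> card near" using fin_near by (rule card_image_le)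
  hence card_bad: "card bad \<le> 2 * d * d + 2 * d * d + 4 * card F"
    using card_near card_edge_squares[OF F] card_Un_le[of "near \<union> prod.swap ` near" "\<Union>f\<in>F. f \<times> f"]
      card_Un_le[of near "prod.swap ` near"] unfolding bad_def by linarith
  have "(\<Union>f\<in>F. f \<times> f) \<subseteq> {1..n} \<times> {1..n}" using F by (auto simp: all_edges_def)
  hence "finite (\<Union>f\<in>F. f \<times> f)" by (rule finite_subset) simp
  hence fin_bad: "finite bad" using fin_near unfolding bad_def by simp
  have "arcs - bad \<subseteq> admissible F G a b"
    using admissible_contains[OF ab] unfolding arcs_def bad_def near_def X_def .
  hence card_good: "card (arcs - bad) \<le> card (admissible F G a b)"
    by (rule card_mono[OF finite_admissible[OF sub]])
  have "card arcs = n * d" using card_arcs[OF G, of "{1..n}"] by (simp add: arcs_def)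
  thus ?thesis using diff_card_le_card_Diff[OF fin_bad, of arcs] card_bad card_good by linarith
qed

section \<open>Double counting the switchings\<close>

lemma card_neighbour_choices:
  assumes B: "B \<subseteq> regular_graphs n d" and ab: "a \<in> {1..n}" "b \<in> {1..n}"
  shows "card (Sigma B (\<lambda>H. neighbours H a \<times> neighbours H b)) = card B * (d * d)"
proof -
  have "finite B" using B finite_regular_graphs by (rule finite_subset)
  hence "card (Sigma B (\<lambda>H. neighbours H a \<times> neighbours H b))
      = (\<Sum>H\<in>B. card (neighbours H a \<times> neighbours H b))"
    using B finite_neighbours[OF regular_graph_edges] by (subst card_SigmaI) auto
  also have "\<dots> = (\<Sum>H\<in>B. d * d)"
    using B ab by (intro sum.cong) (auto simp: card_cartesian_product card_neighbours)
  finally show ?thesis by simp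
qed

text \<open>The switching map on pairs (graph, admissible ordered edge); it keeps the ordered edge
  so that the original graph can be recovered.\<close>
definition switch_pair :: "nat \<Rightarrow> nat \<Rightarrow> nat set set \<times> nat \<times> nat \<Rightarrow> nat set set \<times> nat \<times> nat" where
  "switch_pair a b = (\<lambda>(G, (x, y)). (switch G a b x y, (x, y)))"

abbreviation containing :: "nat \<Rightarrow> nat \<Rightarrow> nat set set \<Rightarrow> nat \<Rightarrow> nat \<Rightarrow> nat set set set" where
  "containing n d F a b \<equiv> {G \<in> regular_graphs n d. F \<subseteq> G \<and> {a,b} \<in> G}"

abbreviation avoiding :: "nat \<Rightarrow> nat \<Rightarrow> nat set set \<Rightarrow> nat \<Rightarrow> nat \<Rightarrow> nat set set set" where
  "avoiding n d F a b \<equiv> {H \<in> regular_graphs n d. F \<subseteq> H \<and> {a,b} \<notin> H}"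

lemma card_switchable_pairs:
  assumes F: "F \<subseteq> all_edges n"
  shows "card (containing n d F a b) * (n * d - 4 * d * d - 4 * card F)
     \<le> card (Sigma (containing n d F a b) (\<lambda>G. admissible F G a b))"
proof -
  let ?A = "containing n d F a b"
  have "n * d - 4 * d * d - 4 * card F \<le> card (admissible F G a b)" if "G \<in> ?A" for G
    using that card_admissible[of G n d a b F] F by auto
  hence "card ?A * (n * d - 4 * d * d - 4 * card F) \<le> (\<Sum>G\<in>?A. card (admissible F G a b))"
    using sum_bounded_below[of ?A "n * d - 4 * d * d - 4 * card F"] by simp
  also have "\<dots> = card (Sigma ?A (\<lambda>G. admissible F G a b))"
    using finite_regular_graphs finite_admissible[OF regular_graph_edges]
    by (subst card_SigmaI) auto
  finally show ?thesis .
qed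

text \<open>Switching is injective on admissible pairs, because it can be undone.\<close>
lemma inj_on_switch_pair:
  "inj_on (switch_pair a b) (Sigma (containing n d F a b) (\<lambda>G. admissible F G a b))"
proof (rule inj_onI)
  fix p q assume "p \<in> Sigma (containing n d F a b) (\<lambda>G. admissible F G a b)"
    "q \<in> Sigma (containing n d F a b) (\<lambda>G. admissible F G a b)" "switch_pair a b p = switch_pair a b q"
  then obtain G G' x y where pq: "p = (G,(x,y))" "q = (G',(x,y))"
    and G: "G \<in> regular_graphs n d" "{a,b} \<in> G" "(x,y) \<in> admissible F G a b"
    and G': "G' \<in> regular_graphs n d" "{a,b} \<in> G'" "(x,y) \<in> admissible F G' a b"
    and eq: "switch G a b x y = switch G' a b x y"
    unfolding switch_pair_def by auto
  have "G = G'" using switch_inverse[OF G] switch_inverse[OF G'] eq by simp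
  thus "p = q" using pq by simp
qed

lemma switch_pair_image:
  assumes "{a,b} \<notin> F"
  shows "switch_pair a b ` Sigma (containing n d F a b) (\<lambda>G. admissible F G a b)
     \<subseteq> Sigma (avoiding n d F a b) (\<lambda>H. neighbours H a \<times> neighbours H b)"
proof
  fix q assume "q \<in> switch_pair a b ` Sigma (containing n d F a b) (\<lambda>G. admissible F G a b)"
  then obtain G x y where G: "G \<in> regular_graphs n d" "{a,b} \<in> G" "(x,y) \<in> admissible F G a b"
    and FG: "F \<subseteq> G" and q: "q = (switch G a b x y, (x, y))" unfolding switch_pair_def by auto
  note props = switch_properties[OF G FG assms]
  show "q \<in> Sigma (avoiding n d F a b) (\<lambda>H. neighbours H a \<times> neighbours H b)"
    using switch_regular[OF G] props q by simp
qed

text \<open>The switching inequality: graphs containing F and {a,b}, weighted by their at least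
  nd - 4d^2 - 4|F| admissible pairs, inject into graphs containing F but not {a,b}, weighted
  by their d^2 choices of neighbours of a and b.\<close>
lemma switching_count:
  assumes F: "F \<subseteq> all_edges n" and abF: "{a,b} \<notin> F" and ab: "a \<in> {1..n}" "b \<in> {1..n}"
  shows "card (containing n d F a b) * (n * d - 4 * d * d - 4 * card F)
     \<le> card (avoiding n d F a b) * (d * d)"
proof -
  let ?T = "Sigma (containing n d F a b) (\<lambda>G. admissible F G a b)"
  let ?U = "Sigma (avoiding n d F a b) (\<lambda>H. neighbours H a \<times> neighbours H b)"
  have "finite ?U"
    using finite_regular_graphs finite_neighbours[OF regular_graph_edges] by auto
  have "card (containing n d F a b) * (n * d - 4 * d * d - 4 * card F) \<le> card ?T"
    using F by (rule card_switchable_pairs)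
  also have "\<dots> = card (switch_pair a b ` ?T)"
    by (rule card_image[symmetric, OF inj_on_switch_pair])
  also have "\<dots> \<le> card ?U"
    using \<open>finite ?U\<close> switch_pair_image[OF abF] by (rule card_mono)
  also have "\<dots> = card (avoiding n d F a b) * (d * d)"
    using ab by (intro card_neighbour_choices) auto
  finally show ?thesis .
qed

lemma one_more_edge:
  assumes d: "1 \<le> d" and n: "16 * d \<le> n" and F: "F \<subseteq> all_edges n"
    and small: "8 * d * (card F + 1) \<le> n" and e: "e \<in> all_edges n" "e \<notin> F"
  shows "card {G \<in> regular_graphs n d. insert e F \<subseteq> G} * n
     \<le> 4 * d * card {G \<in> regular_graphs n d. F \<subseteq> G}"
proof -
  obtain a b where ab: "e = {a,b}" using e(1) by (auto simp: all_edges_def card_2_iff)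
  have ab_n: "a \<in> {1..n}" "b \<in> {1..n}" using e(1) ab by (auto simp: all_edges_def)
  define A where "A = card {G \<in> regular_graphs n d. insert e F \<subseteq> G}"
  define S where "S = card {G \<in> regular_graphs n d. F \<subseteq> G}"
  define M where "M = n * d - 4 * d * d - 4 * card F"
  have A_eq: "{G \<in> regular_graphs n d. insert e F \<subseteq> G} = containing n d F a b"
    using ab by auto
  have "A * M \<le> card (avoiding n d F a b) * (d * d)"
    using switching_count[OF F e(2)[unfolded ab] ab_n] unfolding A_def M_def A_eq .
  also have "\<dots> \<le> S * (d * d)" unfolding S_def
    by (intro mult_right_mono card_mono) (auto simp: finite_regular_graphs)
  finally have switching: "A * M \<le> S * (d * d)" .
  have "16 * card F \<le> 16 * d * card F" using d by simp
  also have "\<dots> \<le> 2 * (8 * d * (card F + 1))" by simp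
  also have "\<dots> \<le> 2 * n" using small by simp
  also have "\<dots> \<le> 2 * n * d" using d by simp
  finally have "16 * card F \<le> 2 * n * d" .
  moreover have "16 * d * d \<le> n * d" using n by simp
  ultimately have nd_le: "n * d \<le> 4 * M" unfolding M_def by linarith
  have "A * n * d = A * (n * d)" by simp
  also have "\<dots> \<le> 4 * (A * M)" using nd_le by simp
  also have "\<dots> \<le> 4 * d * S * d" using switching by (simp add: mult.commute mult.left_commute)
  finally show ?thesis using d unfolding A_def S_def by simp
qed

section \<open>Existence of regular graphs\<close>

lemma regular_graph_of_relation:
  fixes R :: "nat \<Rightarrow> nat \<Rightarrow> bool"
  assumes R: "\<And>u w. R u w \<Longrightarrow> u \<in> {1..n} \<and> w \<in> {1..n} \<and> u \<noteq> w"
    and sym: "\<And>u w. R u w \<Longrightarrow> R w u"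
    and card_R: "\<And>v. v \<in> {1..n} \<Longrightarrow> card {w. R v w} = d"
  shows "{{u,w} | u w. R u w} \<in> regular_graphs n d"
proof -
  define E where "E = {{u,w} | u w. R u w}"
  have E: "E \<subseteq> all_edges n" using R by (auto simp: E_def all_edges_def)
  have "neighbours E v = {w. R v w}" for v
    using sym by (auto simp: E_def neighbours_def doubleton_eq_iff)
  hence "degree E v = d" if "v \<in> {1..n}" for v
    using degree_eq_card_neighbours[OF E] card_R[OF that] by simp
  thus ?thesis using E unfolding E_def[symmetric] by (simp add: regular_graphs_def)
qed

text \<open>Offsets of a circulant graph: the vertices u, w are adjacent iff (w - u) mod n lies
  in this set, which contains 1..h and n-h..n-1 for h = d div 2, plus n/2 if d is odd.\<close>
definition circulant_offsets :: "nat \<Rightarrow> nat \<Rightarrow> int set" where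
  "circulant_offsets n d = {1..int (d div 2)} \<union> {int n - int (d div 2)..int n - 1} \<union>
     (if odd d then {int n div 2} else {})"

text \<open>The offsets are nonzero residues, closed under negation modulo n (for odd d this needs n
  even, which follows from dn even).\<close>
lemma circulant_offsets_range:
  assumes nd: "d < n" and even: "even (d * n)"
  shows "circulant_offsets n d \<subseteq> {1..int n - 1}"
    and "\<And>t. t \<in> circulant_offsets n d \<Longrightarrow> int n - t \<in> circulant_offsets n d"
proof -
  define h where "h = int (d div 2)"
  have h: "2 * h < int n" using nd unfolding h_def by linarith
  have "odd d \<Longrightarrow> 2 \<le> int n" using nd by (auto elim: oddE)
  thus "circulant_offsets n d \<subseteq> {1..int n - 1}"
    unfolding circulant_offsets_def h_def[symmetric] using h by auto
  show "int n - t \<in> circulant_offsets n d" if "t \<in> circulant_offsets n d" for t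
  proof (cases "odd d")
    case True
    hence "int n - int n div 2 = int n div 2" using even by (auto elim!: evenE)
    thus ?thesis using that True unfolding circulant_offsets_def h_def[symmetric] by auto
  next
    case False
    thus ?thesis using that unfolding circulant_offsets_def h_def[symmetric] by auto
  qed
qed

lemma card_circulant_offsets:
  assumes nd: "d < n" and even: "even (d * n)"
  shows "card (circulant_offsets n d) = d"
proof -
  define h where "h = int (d div 2)"
  have h: "2 * h < int n" using nd unfolding h_def by linarith
  have d: "d = 2 * nat h + (if odd d then 1 else 0)" unfolding h_def by simp
  have "{1..h} \<inter> {int n - h..int n - 1} = {}" using h by auto
  hence two_blocks: "card ({1..h} \<union> {int n - h..int n - 1}) = 2 * nat h"
    by (subst card_Un_disjoint) auto
  show ?thesis
  proof (cases "odd d")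
    case True
    then obtain m where m: "n = 2 * m" using even by (auto elim!: evenE)
    have "2 * h + 1 < int n" using nd True unfolding h_def by (auto elim!: oddE)
    hence "int n div 2 \<notin> {1..h} \<union> {int n - h..int n - 1}" using m by auto
    thus ?thesis unfolding circulant_offsets_def h_def[symmetric] using True two_blocks d by simp
  next
    case False
    thus ?thesis unfolding circulant_offsets_def h_def[symmetric] using two_blocks d by simp
  qed
qed

text \<open>Each vertex u has exactly |D| vertices w with (w - u) mod n \<in> D, since w \<mapsto> (w - u) mod n
  is a bijection from [n] onto the residues {0..<n}.\<close>
lemma card_offset_neighbours:
  fixes D :: "int set"
  assumes D: "D \<subseteq> {0..<int n}" and u: "u \<in> {1..n}"
  shows "card {w \<in> {1..n}. (int w - int u) mod int n \<in> D} = card D"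
proof -
  define f where "f = (\<lambda>w::nat. (int w - int u) mod int n)"
  have inj: "inj_on f {1..n}"
  proof (rule inj_onI)
    fix w w' assume w: "w \<in> {1..n}" "w' \<in> {1..n}" and "f w = f w'"
    hence "int n dvd int w - int w'" by (simp add: f_def mod_eq_dvd_iff)
    moreover have "\<bar>int w - int w'\<bar> < int n" using w by auto
    ultimately have "int w - int w' = 0" using dvd_imp_le_int[of "int w - int w'" "int n"] by force
    thus "w = w'" by simp
  qed
  have onto: "f ` {1..n} = {0..<int n}"
  proof (rule card_subset_eq)
    show "f ` {1..n} \<subseteq> {0..<int n}" using u by (auto simp: f_def)
    show "card (f ` {1..n}) = card {0..<int n}" using card_image[OF inj] by simp
  qed simp
  have "f ` {w \<in> {1..n}. f w \<in> D} = f ` {1..n} \<inter> D" by auto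
  also have "\<dots> = D" using onto D by blast
  finally have image: "f ` {w \<in> {1..n}. f w \<in> D} = D" .
  have "inj_on f {w \<in> {1..n}. f w \<in> D}" using inj by (rule inj_on_subset) auto
  hence "card {w \<in> {1..n}. f w \<in> D} = card D" using image card_image by fastforce
  thus ?thesis by (simp add: f_def)
qed

text \<open>For d < n and dn even a d-regular graph on [n] exists: the circulant graph.\<close>
lemma regular_graphs_nonempty:
  assumes nd: "d < n" and even: "even (d * n)"
  shows "regular_graphs n d \<noteq> {}"
proof -
  define D where "D = circulant_offsets n d"
  note D = circulant_offsets_range[OF nd even, folded D_def]
  define R where "R = (\<lambda>u w. u \<in> {1..n} \<and> w \<in> {1..n} \<and> (int w - int u) mod int n \<in> D)"
  have "{{u,w} | u w. R u w} \<in> regular_graphs n d"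
  proof (rule regular_graph_of_relation)
    fix u w assume r: "R u w"
    hence t: "(int w - int u) mod int n \<in> D" unfolding R_def by simp
    hence nz: "(int w - int u) mod int n \<noteq> 0" using D(1) by force
    thus "u \<in> {1..n} \<and> w \<in> {1..n} \<and> u \<noteq> w" using r unfolding R_def by auto
    have "(int u - int w) mod int n = int n - (int w - int u) mod int n"
      using zmod_zminus1_eq_if[of "int w - int u" "int n"] nz by simp
    thus "R w u" using D(2)[OF t] r unfolding R_def by simp
  next
    fix v assume v: "v \<in> {1..n}"
    have "{w. R v w} = {w \<in> {1..n}. (int w - int v) mod int n \<in> D}" unfolding R_def using v by auto
    also have "card \<dots> = card D" by (rule card_offset_neighbours) (use D(1) v in auto)
    finally show "card {w. R v w} = d" using card_circulant_offsets[OF nd even] by (simp add: D_def)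
  qed
  thus ?thesis by blast
qed

section \<open>Iterating over the prescribed edges\<close>

lemma card_graphs_containing:
  assumes fin: "finite F" and d: "1 \<le> d" and n: "16 * d \<le> n"
  shows "F \<subseteq> all_edges n \<Longrightarrow> 8 * d * card F \<le> n \<Longrightarrow>
    real (card {G \<in> regular_graphs n d. F \<subseteq> G})
      \<le> (4 * real d / real n) ^ card F * real (card (regular_graphs n d))"
  using fin
proof (induction F rule: finite_induct)
  case empty
  show ?case by simp
next
  case (insert e F)
  have n_pos: "0 < real n" using n d by simp
  have step: "card {G \<in> regular_graphs n d. insert e F \<subseteq> G} * n
      \<le> 4 * d * card {G \<in> regular_graphs n d. F \<subseteq> G}"
    using insert by (intro one_more_edge[OF d n]) auto
  have IH: "real (card {G \<in> regular_graphs n d. F \<subseteq> G})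
      \<le> (4 * real d / real n) ^ card F * real (card (regular_graphs n d))"
    using insert by (intro insert.IH) auto
  have "real (card {G \<in> regular_graphs n d. insert e F \<subseteq> G} * n)
      \<le> real (4 * d * card {G \<in> regular_graphs n d. F \<subseteq> G})"
    using step by (simp only: of_nat_le_iff)
  hence "real (card {G \<in> regular_graphs n d. insert e F \<subseteq> G})
      \<le> 4 * real d / real n * real (card {G \<in> regular_graphs n d. F \<subseteq> G})"
    using n_pos by (simp add: field_simps)
  also have "\<dots> \<le> 4 * real d / real n * ((4 * real d / real n) ^ card F
      * real (card (regular_graphs n d)))"
    using IH by (intro mult_left_mono) auto
  finally show ?case using insert by (simp add: mult_ac)
qed

lemma prob_contains_edges:
  assumes fin: "finite F" and F: "F \<subseteq> all_edges n" and d: "1 \<le> d" and n: "16 * d \<le> n"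
    and small: "8 * d * card F \<le> n" and even: "even (d * n)"
  shows "measure_pmf.prob (random_regular n d) {G. F \<subseteq> G} \<le> (4 * real d / real n) ^ card F"
proof -
  define R where "R = regular_graphs n d"
  have R: "R \<noteq> {}" "finite R"
    unfolding R_def using regular_graphs_nonempty even n d finite_regular_graphs by auto
  have "measure_pmf.prob (random_regular n d) {G. F \<subseteq> G}
      = real (card {G \<in> R. F \<subseteq> G}) / real (card R)"
    unfolding random_regular_def R_def[symmetric] using R
    by (simp add: measure_pmf_of_set Int_def conj_commute)
  also have "\<dots> \<le> (4 * real d / real n) ^ card F"
    using card_graphs_containing[OF fin d n F small] R unfolding R_def[symmetric]
    by (simp add: divide_le_eq card_gt_0_iff)
  finally show ?thesis .
qed

lemma prescribed_edges:
  assumes ab: "\<forall>i\<in>{1..k}. a i \<in> {1..n} \<and> b i \<in> {1..n} \<and> a i \<noteq> b i"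
    and inj: "inj_on (\<lambda>i. {a i, b i}) {1..k}"
  defines "F \<equiv> (\<lambda>i. {a i, b i}) ` {1..k}"
  shows "finite F" "F \<subseteq> all_edges n" "card F = k"
    "{G. \<forall>i\<in>{1..k}. {a i, b i} \<in> G} = {G. F \<subseteq> G}"
  using ab card_image[OF inj] by (auto simp: F_def all_edges_def)

theorem mainTheorem7:
  fixes d :: nat
  shows "\<exists>N. \<forall>n\<ge>N. \<forall>k (a :: nat \<Rightarrow> nat) (b :: nat \<Rightarrow> nat).
     even (d * n) \<longrightarrow>
     (\<forall>i\<in>{1..k}. a i \<in> {1..n} \<and> b i \<in> {1..n} \<and> a i \<noteq> b i) \<longrightarrow>
     inj_on (\<lambda>i. {a i, b i}) {1..k} \<longrightarrow>
     real k \<le> real n / (8 * real d) \<longrightarrow>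
     measure_pmf.prob (random_regular n d)
        {G. \<forall>i\<in>{1..k}. {a i, b i} \<in> G}
       \<le> (20 * real d / real n) ^ k"
proof (intro exI[of _ "16 * d"] allI impI)
  fix n k :: nat and a b :: "nat \<Rightarrow> nat"
  assume n: "16 * d \<le> n" and even: "even (d * n)"
    and ab: "\<forall>i\<in>{1..k}. a i \<in> {1..n} \<and> b i \<in> {1..n} \<and> a i \<noteq> b i"
    and inj: "inj_on (\<lambda>i. {a i, b i}) {1..k}" and k: "real k \<le> real n / (8 * real d)"
  note F = prescribed_edges[OF ab inj]
  show "measure_pmf.prob (random_regular n d) {G. \<forall>i\<in>{1..k}. {a i, b i} \<in> G}
       \<le> (20 * real d / real n) ^ k"
  proof (cases "k = 0")
    case True
    thus ?thesis by (simp add: measure_pmf.prob_le_1)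
  next
    case False
    hence d: "1 \<le> d" using k by (cases "d = 0") auto
    have "real (8 * d * k) \<le> real n" using k d by (simp add: field_simps)
    hence small: "8 * d * k \<le> n" by (simp only: of_nat_le_iff)
    have "measure_pmf.prob (random_regular n d) {G. \<forall>i\<in>{1..k}. {a i, b i} \<in> G}
        \<le> (4 * real d / real n) ^ k"
      using prob_contains_edges[OF F(1,2) d n _ even] F(3,4) small by simp
    also have "\<dots> \<le> (20 * real d / real n) ^ k"
      by (intro power_mono divide_right_mono) auto
    finally show ?thesis .
  qed
qed

end
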